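(* Let $\tilde Q\subseteq\mathbb{R}^m$ be a closed convex set, $A\in\mathbb{R}^{n\times m}$, $b\in\mathbb{R}^n$, and let $\varphi:\tilde Q\to\mathbb{R}$ be $\mu$-strongly convex ($\mu>0$) with respect to the $p$-norm on $\tilde Q$ for some $1\le p\le2$. Consider the problem $$\varphi(y)\to\min_{Ay=b,\ y\in\tilde Q}$$ with solution $y_*$, and its dual (up to sign) $$f(x)=\max_{y\in\tilde Q}\{\langle x,b-Ay\rangle-\varphi(y)\}\to\min_{x\in\mathbb{R}^n},$$ and assume the dual has a solution; let $x_*$ be the dual solution of minimal $2$-norm and $R=\|x_*\|_2$. Denote by $y(x)$ the maximizer in the definition of $f(x)$, so that $\nabla f(x)=b-Ay(x)$. Let $L=\frac{1}{\mu}\max_{\|y\|_2\le1}\|Ay\|_2^2$ and run gradient descent $x^{k+1}=x^k-\frac{1}{L}\nabla f(x^k)$ from $x^0=0$. Set $$\bar x^N=\frac1N\sum_{k=1}^N x^k,\qquad \bar y^N=\frac1N\sum_{k=0}^{N-1}y(x^k).$$ Let $\varepsilon>0,\tilde\varepsilon>0$. Then the conditions $f(\bar x^N)+\varphi(\bar y^N)\le\varepsilon$ and $\|A\bar y^N-b\|_2\le\tilde\varepsilon$ imply $$\varphi(\bar y^N)-\varphi(y_* )\le\varepsilon,\qquad\|A\bar y^N-b\|_2\le\tilde\varepsilon,$$ and these two conditions $f(\bar x^N)+\varphi(\bar y^N)\le\varepsilon$, $\|A\bar y^N-b\|_2\le\tilde\varepsilon$ are guaranteed to hold for some $$N\le\max\left\{\frac{2LR^2}{\varepsilon},\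 \frac{2LR}{\tilde\varepsilon}\right\}.$$
   Context: A function $\varphi$ is $\mu$-strongly convex with respect to the $p$-norm on $\tilde Q$ if $\varphi(y)\ge\varphi(z)+\langle g,y-z\rangle+\frac{\mu}{2}\|y-z\|_p^2$ for all $y,z\in\tilde Q$ and all subgradients $g\in\partial\varphi(z)$. *)

theory Defs
  imports "HOL-Analysis.Analysis"
begin

definition pnorm :: "real \<Rightarrow> real ^ 'm \<Rightarrow> real" where
  "pnorm p v = (\<Sum>i\<in>UNIV. \<bar>v $ i\<bar> powr p) powr (1 / p)"

definition subgrad_on :: "'a::real_inner set \<Rightarrow> ('a \<Rightarrow> real) \<Rightarrow> 'a \<Rightarrow> 'a set" where
  "subgrad_on Q \<phi> z = {g. \<forall>y\<in>Q. \<phi> y \<ge> \<phi> z + inner g (y - z)}"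

definition strongly_convex_pnorm_on ::
  "real \<Rightarrow> real \<Rightarrow> (real ^ 'm) set \<Rightarrow> (real ^ 'm \<Rightarrow> real) \<Rightarrow> bool" where
  "strongly_convex_pnorm_on \<mu> p Q \<phi> \<longleftrightarrow> convex_on Q \<phi> \<and>
     (\<forall>y\<in>Q. \<forall>z\<in>Q. \<forall>g\<in>subgrad_on Q \<phi> z.
        \<phi> y \<ge> \<phi> z + inner g (y - z) + \<mu> / 2 * (pnorm p (y - z))\<^sup>2)"

definition dual_obj ::
  "(real ^ 'm) set \<Rightarrow> (real ^ 'm \<Rightarrow> real) \<Rightarrow> real ^ 'm ^ 'n \<Rightarrow> real ^ 'n \<Rightarrow> real ^ 'n \<Rightarrow> real" where
  "dual_obj Q \<phi> A b x = (SUP y\<in>Q. inner x (b - A *v y) - \<phi> y)"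

end

(*
  The dual objective f is a pointwise maximum of affine functions, hence convex, and strong
  convexity of \<phi> (a fortiori in the 2-norm, since p \<le> 2) makes it L-smooth with gradient
  b - A y(x).  The three-point estimate of a gradient step, telescoped over N steps and averaged
  using the convexity of f and \<phi>, gives f(xbar) + \<phi>(ybar) \<le> <x, b - A ybar> + L |x|^2 / (2N)
  for every x.  Weak duality at a dual solution bounds the left side below by -R |A ybar - b|;
  testing the estimate at x = -2R (b - A ybar) / |b - A ybar| then yields both
  f(xbar) + \<phi>(ybar) \<le> 2 L R^2 / N and |A ybar - b| \<le> 2 L R / N.
*)
theory Submission
  imports Defs
begin

lemma norm_le_pnorm:
  fixes v :: "real ^ 'm"
  assumes p_pos: "0 < p" and p_le: "p \<le> 2"
  shows "norm v \<le> pnorm p v"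
proof (cases "v = 0")
  case True
  then show ?thesis by (simp add: pnorm_def)
next
  case False
  define t where "t = norm v"
  have t_pos: "t > 0" using False by (simp add: t_def)
  have t_sq: "t\<^sup>2 = (\<Sum>i\<in>UNIV. \<bar>v $ i\<bar>\<^sup>2)"
    unfolding t_def power2_norm_eq_inner inner_vec_def by (simp add: power2_eq_square)
  have coord: "t powr (p - 2) * \<bar>v $ i\<bar>\<^sup>2 \<le> \<bar>v $ i\<bar> powr p" for i
  proof (cases "v $ i = 0")
    case False
    have vi: "0 < \<bar>v $ i\<bar>" "\<bar>v $ i\<bar> \<le> t"
      using False component_le_norm_cart[of v i] by (auto simp: t_def)
    have "t powr (p - 2) \<le> \<bar>v $ i\<bar> powr (p - 2)"
      by (rule powr_mono2') (use p_le vi in auto)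
    then have "t powr (p - 2) * \<bar>v $ i\<bar>\<^sup>2 \<le> \<bar>v $ i\<bar> powr (p - 2) * \<bar>v $ i\<bar> powr 2"
      using vi by (simp add: mult_right_mono)
    also have "\<dots> = \<bar>v $ i\<bar> powr ((p - 2) + 2)" by (simp only: powr_add)
    also have "\<dots> = \<bar>v $ i\<bar> powr p" by simp
    finally show ?thesis .
  qed simp
  have "t powr p = t powr ((p - 2) + 2)" by simp
  also have "\<dots> = t powr (p - 2) * t\<^sup>2"
    using t_pos by (simp only: powr_add) simp
  also have "\<dots> \<le> (\<Sum>i\<in>UNIV. \<bar>v $ i\<bar> powr p)"
    unfolding t_sq sum_distrib_left by (rule sum_mono) (rule coord)
  finally have sum_ge: "t powr p \<le> (\<Sum>i\<in>UNIV. \<bar>v $ i\<bar> powr p)" .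
  have "(t powr p) powr (1 / p) \<le> pnorm p v"
    unfolding pnorm_def by (rule powr_mono2) (use sum_ge p_pos in auto)
  then show ?thesis using t_pos p_pos by (simp add: powr_powr t_def)
qed

lemma strongly_convex_pnorm_on_norm:
  assumes "strongly_convex_pnorm_on \<mu> p Q \<phi>" "0 < p" "p \<le> 2" "0 \<le> \<mu>"
    and "y \<in> Q" "z \<in> Q" "g \<in> subgrad_on Q \<phi> z"
  shows "\<phi> z + inner g (y - z) + \<mu> / 2 * (norm (y - z))\<^sup>2 \<le> \<phi> y"
proof -
  have "(norm (y - z))\<^sup>2 \<le> (pnorm p (y - z))\<^sup>2"
    by (rule power_mono) (use norm_le_pnorm[OF assms(2,3)] in auto)
  then have "\<mu> / 2 * (norm (y - z))\<^sup>2 \<le> \<mu> / 2 * (pnorm p (y - z))\<^sup>2"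
    using assms(4) by (simp add: mult_left_mono)
  with assms show ?thesis unfolding strongly_convex_pnorm_on_def by fastforce
qed

abbreviation sq_matrix_norm :: "real ^ 'm ^ 'n \<Rightarrow> real" where
  "sq_matrix_norm A \<equiv> Sup {(norm (A *v y))\<^sup>2 | y. norm y \<le> 1}"

lemma bdd_above_sq_matrix_norm:
  fixes A :: "real ^ 'm ^ 'n"
  shows "bdd_above {(norm (A *v y))\<^sup>2 | y. norm y \<le> 1}"
proof -
  obtain K where K: "\<And>y. norm (A *v y) \<le> norm y * K" "K > 0"
    using bounded_linear.pos_bounded[OF matrix_vector_mul_bounded_linear[of A]] by blast
  have "norm (A *v y) \<le> K" if "norm y \<le> 1" for y
  proof -
    have "norm y * K \<le> 1 * K" by (rule mult_right_mono) (use that K in auto)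
    then show ?thesis using K(1)[of y] by simp
  qed
  then show ?thesis
    by (intro bdd_aboveI[of _ "K\<^sup>2"]) (auto intro: power_mono)
qed

lemma sq_matrix_norm_nonneg:
  fixes A :: "real ^ 'm ^ 'n"
  shows "0 \<le> sq_matrix_norm A"
  by (rule cSup_upper2[of "(norm (A *v 0))\<^sup>2"]) (auto intro!: exI[of _ 0] bdd_above_sq_matrix_norm)

lemma norm_matrix_vector_sq_le:
  fixes A :: "real ^ 'm ^ 'n"
  shows "(norm (A *v v))\<^sup>2 \<le> sq_matrix_norm A * (norm v)\<^sup>2"
proof (cases "v = 0")
  case False
  define u where "u = (1 / norm v) *\<^sub>R v"
  have "norm u \<le> 1" using False by (simp add: u_def)
  then have "(norm (A *v u))\<^sup>2 \<le> sq_matrix_norm A"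
    by (intro cSup_upper[OF _ bdd_above_sq_matrix_norm]) blast
  moreover have "norm (A *v u) = norm (A *v v) / norm v"
    using False by (simp add: u_def matrix_vector_mult_scaleR)
  ultimately show ?thesis
    using False by (simp add: power_divide field_simps)
qed simp

lemma matrix_vector_eq_0_if_sq_matrix_norm_0:
  fixes A :: "real ^ 'm ^ 'n"
  shows "sq_matrix_norm A = 0 \<Longrightarrow> A *v v = 0"
  using norm_matrix_vector_sq_le[of A v] by simp

lemma matrix_vector_mult_sum: "A *v (\<Sum>k\<in>I. v k) = (\<Sum>k\<in>I. A *v v k)"
  by (induct I rule: infinite_finite_induct) (simp_all add: matrix_vector_right_distrib)

lemma young_quadratic:
  fixes a c d \<mu> S :: real
  assumes "0 \<le> a" "0 \<le> c" "0 < \<mu>" "0 \<le> S" "c\<^sup>2 \<le> S * d\<^sup>2"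
  shows "a * c - \<mu> / 2 * d\<^sup>2 \<le> (1 / \<mu>) * S / 2 * a\<^sup>2"
proof -
  have "c \<le> sqrt S * \<bar>d\<bar>"
    using assms real_sqrt_le_mono[OF assms(5)] by (simp add: real_sqrt_mult)
  then have "2 * \<mu> * (a * c) \<le> 2 * (sqrt S * a) * (\<mu> * \<bar>d\<bar>)"
    using assms by (simp add: mult_left_mono algebra_simps)
  also have "\<dots> \<le> (sqrt S * a)\<^sup>2 + (\<mu> * \<bar>d\<bar>)\<^sup>2"
    by (rule sum_squares_bound[of "sqrt S * a", simplified, THEN order_trans]) simp
  also have "\<dots> = S * a\<^sup>2 + \<mu>\<^sup>2 * d\<^sup>2"
    using assms by (simp add: power_mult_distrib)
  finally show ?thesis using assms by (simp add: field_simps power2_eq_square)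
qed

lemma gradient_step_identity:
  fixes x x' z g :: "'a::real_inner"
  assumes "g = L *\<^sub>R (x - x')"
  shows "inner g (x' - x) + L / 2 * (norm (x' - x))\<^sup>2
    = L / 2 * ((norm (x - z))\<^sup>2 - (norm (x' - z))\<^sup>2) - inner g (x - z)"
proof -
  define d where "d = x - x'"
  have "(norm (x' - z))\<^sup>2 = (norm ((x - z) - d))\<^sup>2" by (simp add: d_def)
  also have "\<dots> = (norm (x - z))\<^sup>2 - 2 * inner (x - z) d + (norm d)\<^sup>2"
    by (simp add: power2_norm_eq_inner inner_diff_left inner_diff_right inner_commute)
  finally have shifted: "(norm (x' - z))\<^sup>2 = (norm (x - z))\<^sup>2 - 2 * inner (x - z) d + (norm d)\<^sup>2" .
  have "g = L *\<^sub>R d" "x' - x = - d" using assms by (simp_all add: d_def)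
  then have "inner g (x' - x) = - L * (norm d)\<^sup>2" "inner g (x - z) = L * inner (x - z) d"
      "(norm (x' - x))\<^sup>2 = (norm d)\<^sup>2"
    by (simp_all add: power2_norm_eq_inner inner_commute)
  with shifted show ?thesis by algebra
qed

lemma convex_on_mean_le:
  assumes "convex_on C f" "finite I" "I \<noteq> {}" "\<And>i. i \<in> I \<Longrightarrow> y i \<in> C"
  shows "(1 / real (card I)) *\<^sub>R (\<Sum>i\<in>I. y i) \<in> C"
    and "f ((1 / real (card I)) *\<^sub>R (\<Sum>i\<in>I. y i)) \<le> (1 / real (card I)) * (\<Sum>i\<in>I. f (y i))"
proof -
  have weights: "(\<Sum>i\<in>I. 1 / real (card I)) = 1"
    using assms(2,3) by simp
  have "convex C" using assms(1) by (simp add: convex_on_def)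
  from convex_sum[OF assms(2) this weights _ assms(4)]
  show "(1 / real (card I)) *\<^sub>R (\<Sum>i\<in>I. y i) \<in> C"
    by (simp add: scaleR_sum_right)
  from convex_on_sum[OF assms(2,3,1) weights _ assms(4)]
  show "f ((1 / real (card I)) *\<^sub>R (\<Sum>i\<in>I. y i)) \<le> (1 / real (card I)) * (\<Sum>i\<in>I. f (y i))"
    by (simp add: scaleR_sum_right sum_distrib_left)
qed

lemma quadratic_model_bounds:
  fixes r :: "'a::real_inner"
  assumes model: "\<And>z. G \<le> inner z r + c * (norm z)\<^sup>2"
    and lower: "- R * norm r \<le> G" and R: "0 \<le> R" and c: "0 \<le> c"
  shows "G \<le> 4 * c * R\<^sup>2" and "norm r \<le> 4 * c * R"
proof -
  have along: "G + t * norm r \<le> c * t\<^sup>2" if "0 \<le> t" for t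
  proof (cases "r = 0")
    case False
    have "G \<le> inner ((- t / norm r) *\<^sub>R r) r + c * (norm ((- t / norm r) *\<^sub>R r))\<^sup>2"
      by (rule model)
    also have "\<dots> = c * t\<^sup>2 - t * norm r"
      using False that by (simp add: power2_norm_eq_inner[symmetric] power2_eq_square)
    finally show ?thesis by simp
  qed (use model[of 0] mult_nonneg_nonneg[OF c zero_le_power2[of t]] in simp)
  have two_R: "G + 2 * R * norm r \<le> 4 * c * R\<^sup>2"
    using along[of "2 * R"] R by (simp add: power2_eq_square)
  then show "G \<le> 4 * c * R\<^sup>2"
    using mult_nonneg_nonneg[OF R norm_ge_zero, of r] by linarith
  show "norm r \<le> 4 * c * R"
  proof (cases "R = 0")
    case True
    show ?thesis
    proof (rule ccontr)
      assume "\<not> ?thesis"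
      then have r_pos: "0 < norm r" using True by simp
      define t where "t = norm r / (c + 1)"
      have t_pos: "0 < t" using r_pos c by (simp add: t_def)
      have "0 \<le> G" using lower True by simp
      then have "t * norm r \<le> c * t\<^sup>2"
        using along[of t] t_pos by linarith
      then have "norm r \<le> c * t"
        using t_pos by (simp add: power2_eq_square mult.left_commute[of c t])
      then have "norm r \<le> c * norm r / (c + 1)"
        using t_pos by (simp add: t_def)
      then show False using r_pos c by (simp add: field_simps)
    qed
  next
    case False
    then have "R * norm r \<le> R * (4 * c * R)"
      using lower two_R by (simp add: power2_eq_square algebra_simps)
    then show ?thesis using False R by simp
  qed
qed

locale dual_maximizer =
  fixes Q :: "(real ^ 'm) set" and \<phi> :: "real ^ 'm \<Rightarrow> real"
    and A :: "real ^ 'm ^ 'n" and b :: "real ^ 'n"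
    and yx :: "real ^ 'n \<Rightarrow> real ^ 'm"
  assumes yx_in: "yx x \<in> Q"
    and yx_max: "y \<in> Q \<Longrightarrow> inner x (b - A *v y) - \<phi> y \<le> inner x (b - A *v yx x) - \<phi> (yx x)"
begin

abbreviation F :: "real ^ 'n \<Rightarrow> real" where
  "F \<equiv> dual_obj Q \<phi> A b"

lemma dual_obj_eq: "F x = inner x (b - A *v yx x) - \<phi> (yx x)"
  unfolding dual_obj_def by (rule cSup_eq_maximum) (use yx_in yx_max in auto)

lemma dual_obj_ge: "y \<in> Q \<Longrightarrow> inner x (b - A *v y) - \<phi> y \<le> F x"
  using yx_max dual_obj_eq by simp

lemma weak_duality: "y \<in> Q \<Longrightarrow> A *v y = b \<Longrightarrow> - \<phi> y \<le> F x"
  using dual_obj_ge[of y x] by simp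

lemma convex_dual_obj: "convex_on UNIV F"
proof (rule convex_onI)
  fix t :: real and x x'
  assume "0 < t" "t < 1"
  define y where "y = yx ((1 - t) *\<^sub>R x + t *\<^sub>R x')"
  have "F ((1 - t) *\<^sub>R x + t *\<^sub>R x')
      = (1 - t) * (inner x (b - A *v y) - \<phi> y) + t * (inner x' (b - A *v y) - \<phi> y)"
    by (simp add: dual_obj_eq y_def inner_add_left algebra_simps)
  also have "\<dots> \<le> (1 - t) * F x + t * F x'"
    using \<open>0 < t\<close> \<open>t < 1\<close> dual_obj_ge[OF yx_in, of x] dual_obj_ge[OF yx_in, of x']
    by (intro add_mono mult_left_mono) (auto simp: y_def)
  finally show "F ((1 - t) *\<^sub>R x + t *\<^sub>R x') \<le> (1 - t) * F x + t * F x'" .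
qed simp

lemma maximizer_subgrad: "- (x v* A) \<in> subgrad_on Q \<phi> (yx x)"
  unfolding subgrad_on_def
proof (intro CollectI ballI)
  fix z assume "z \<in> Q"
  from yx_max[OF this, of x]
  show "\<phi> (yx x) + inner (- (x v* A)) (z - yx x) \<le> \<phi> z"
    by (simp add: dot_lmul_matrix matrix_vector_mult_diff_distrib inner_diff_right)
qed

end

locale strongly_convex_dual = dual_maximizer +
  fixes \<mu> :: real
  assumes mu_pos: "0 < \<mu>"
    and convex_phi: "convex_on Q \<phi>"
    and strongly_convex: "y \<in> Q \<Longrightarrow> z \<in> Q \<Longrightarrow> g \<in> subgrad_on Q \<phi> z \<Longrightarrow>
      \<phi> z + inner g (y - z) + \<mu> / 2 * (norm (y - z))\<^sup>2 \<le> \<phi> y"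
begin

abbreviation L :: real where
  "L \<equiv> (1 / \<mu>) * sq_matrix_norm A"

lemma L_nonneg: "0 \<le> L"
  using mu_pos sq_matrix_norm_nonneg[of A] by simp

lemma dual_obj_descent:
  "F x' \<le> F x + inner (b - A *v yx x) (x' - x) + L / 2 * (norm (x' - x))\<^sup>2"
proof -
  define y y' where "y = yx x" and "y' = yx x'"
  have sc: "\<phi> y - inner x (A *v (y' - y)) + \<mu> / 2 * (norm (y' - y))\<^sup>2 \<le> \<phi> y'"
    using strongly_convex[OF yx_in[of x'] yx_in[of x] maximizer_subgrad[of x]]
    by (simp add: y_def y'_def dot_lmul_matrix)
  have cs: "inner (x' - x) (A *v (y - y')) \<le> norm (x' - x) * norm (A *v (y - y'))"
    by (rule norm_cauchy_schwarz)
  have "(norm (A *v (y - y')))\<^sup>2 \<le> sq_matrix_norm A * (norm (y' - y))\<^sup>2"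
    using norm_matrix_vector_sq_le[of A "y - y'"] by (simp add: norm_minus_commute)
  then have young: "norm (x' - x) * norm (A *v (y - y')) - \<mu> / 2 * (norm (y' - y))\<^sup>2
      \<le> L / 2 * (norm (x' - x))\<^sup>2"
    by (intro young_quadratic[OF _ _ mu_pos sq_matrix_norm_nonneg]) auto
  have "F x' - (F x + inner (b - A *v y) (x' - x))
      = inner (x' - x) (A *v (y - y')) - inner x (A *v (y' - y)) + \<phi> y - \<phi> y'"
    unfolding dual_obj_eq y_def[symmetric] y'_def[symmetric]
    by (simp add: inner_diff_left inner_diff_right matrix_vector_mult_diff_distrib
        inner_commute algebra_simps)
  with sc cs young show ?thesis by (simp add: y_def)
qed

lemma gradient_step_bound:
  assumes "L *\<^sub>R (x - x') = b - A *v yx x"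
  shows "F x' \<le> inner z (b - A *v yx x) - \<phi> (yx x) + L / 2 * ((norm (x - z))\<^sup>2 - (norm (x' - z))\<^sup>2)"
  using dual_obj_descent[of x' x] gradient_step_identity[OF assms[symmetric], of z]
  by (simp add: dual_obj_eq inner_diff_left inner_commute)

end

locale dual_gradient_descent = strongly_convex_dual +
  fixes xk :: "nat \<Rightarrow> _"
  assumes feasible: "\<exists>y. A *v y = b"
    and x0: "xk 0 = 0"
    and step: "xk (Suc k) = xk k - (1 / ((1 / \<mu>) * sq_matrix_norm A)) *\<^sub>R (b - A *v yx (xk k))"
begin

text \<open>For \<open>L = 0\<close> the iteration is stationary because \<open>1 / 0 = 0\<close>; the scaled step
  still holds since then \<open>A = 0\<close> and, by feasibility, \<open>b = 0\<close>.\<close>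

lemma gradient_step: "L *\<^sub>R (xk k - xk (Suc k)) = b - A *v yx (xk k)"
proof (cases "L = 0")
  case True
  then have "A *v v = 0" for v
    using mu_pos matrix_vector_eq_0_if_sq_matrix_norm_0 by simp
  with feasible True show ?thesis by auto
qed (simp add: step)

lemma sum_dual_obj_le:
  "(\<Sum>k<N. F (xk (Suc k)))
    \<le> inner z (\<Sum>k<N. b - A *v yx (xk k)) - (\<Sum>k<N. \<phi> (yx (xk k))) + L / 2 * (norm z)\<^sup>2"
proof -
  define g where "g k = b - A *v yx (xk k)" for k
  have "(\<Sum>k<N. F (xk (Suc k)))
      \<le> (\<Sum>k<N. inner z (g k) - \<phi> (yx (xk k))
              + L / 2 * ((norm (xk k - z))\<^sup>2 - (norm (xk (Suc k) - z))\<^sup>2))"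
    unfolding g_def by (rule sum_mono) (rule gradient_step_bound[OF gradient_step])
  also have "\<dots> = (\<Sum>k<N. inner z (g k) - \<phi> (yx (xk k)))
      + L / 2 * (\<Sum>k<N. (norm (xk k - z))\<^sup>2 - (norm (xk (Suc k) - z))\<^sup>2)"
    by (simp only: sum.distrib sum_distrib_left)
  also have "\<dots> = inner z (\<Sum>k<N. g k) - (\<Sum>k<N. \<phi> (yx (xk k)))
      + L / 2 * ((norm (xk 0 - z))\<^sup>2 - (norm (xk N - z))\<^sup>2)"
    unfolding sum_lessThan_telescope'[of "\<lambda>k. (norm (xk k - z))\<^sup>2"]
    by (simp only: sum_subtractf inner_sum_right)
  also have "\<dots> \<le> inner z (\<Sum>k<N. g k) - (\<Sum>k<N. \<phi> (yx (xk k))) + L / 2 * (norm z)\<^sup>2"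
    by (intro add_left_mono mult_left_mono) (use x0 L_nonneg in auto)
  finally show ?thesis unfolding g_def .
qed

lemma averaged_primal_in: "1 \<le> N \<Longrightarrow> (1 / real N) *\<^sub>R (\<Sum>k<N. yx (xk k)) \<in> Q"
  using convex_on_mean_le(1)[OF convex_phi, of "{..<N}" "\<lambda>k. yx (xk k)"] yx_in
  by (auto simp: lessThan_empty_iff)

lemma averaged_gap_le:
  assumes "1 \<le> N"
  shows "F ((1 / real N) *\<^sub>R (\<Sum>k=1..N. xk k)) + \<phi> ((1 / real N) *\<^sub>R (\<Sum>k<N. yx (xk k)))
    \<le> inner z (b - A *v ((1 / real N) *\<^sub>R (\<Sum>k<N. yx (xk k)))) + L / (2 * real N) * (norm z)\<^sup>2"
proof -
  define ybar where "ybar = (1 / real N) *\<^sub>R (\<Sum>k<N. yx (xk k))"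
  have F_mean: "F ((1 / real N) *\<^sub>R (\<Sum>k=1..N. xk k)) \<le> (1 / real N) * (\<Sum>k<N. F (xk (Suc k)))"
    using convex_on_mean_le(2)[OF convex_dual_obj, of "{1..N}" xk] assms
    by (simp add: sum.atLeast1_atMost_eq)
  have phi_mean: "\<phi> ybar \<le> (1 / real N) * (\<Sum>k<N. \<phi> (yx (xk k)))"
    using convex_on_mean_le(2)[OF convex_phi, of "{..<N}" "\<lambda>k. yx (xk k)"] yx_in assms
    by (auto simp: ybar_def lessThan_empty_iff)
  have "(\<Sum>k<N. b - A *v yx (xk k)) = real N *\<^sub>R (b - A *v ybar)"
    using assms by (simp add: ybar_def sum_subtractf sum_constant_scaleR matrix_vector_mult_sum
        matrix_vector_mult_scaleR scaleR_diff_right del: sum_constant)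
  then have "(\<Sum>k<N. F (xk (Suc k))) + (\<Sum>k<N. \<phi> (yx (xk k)))
      \<le> real N * inner z (b - A *v ybar) + L / 2 * (norm z)\<^sup>2"
    using sum_dual_obj_le[of N z] by simp
  then have "(1 / real N) * ((\<Sum>k<N. F (xk (Suc k))) + (\<Sum>k<N. \<phi> (yx (xk k))))
      \<le> inner z (b - A *v ybar) + L / (2 * real N) * (norm z)\<^sup>2"
    using assms by (simp add: divide_le_eq field_simps)
  with F_mean phi_mean show ?thesis by (simp add: ybar_def distrib_left)
qed

lemma averaged_gap_and_residual_le:
  assumes N: "1 \<le> N" and xstar_opt: "\<And>x. F xstar \<le> F x"
  shows "F ((1 / real N) *\<^sub>R (\<Sum>k=1..N. xk k)) + \<phi> ((1 / real N) *\<^sub>R (\<Sum>k<N. yx (xk k)))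
      \<le> 2 * L * (norm xstar)\<^sup>2 / real N"
    and "norm (A *v ((1 / real N) *\<^sub>R (\<Sum>k<N. yx (xk k))) - b) \<le> 2 * L * norm xstar / real N"
proof -
  define xbar ybar where "xbar = (1 / real N) *\<^sub>R (\<Sum>k=1..N. xk k)"
    and "ybar = (1 / real N) *\<^sub>R (\<Sum>k<N. yx (xk k))"
  have "inner xstar (b - A *v ybar) - \<phi> ybar \<le> F xbar"
    using dual_obj_ge[OF averaged_primal_in[OF N], of xstar] xstar_opt[of xbar]
    by (simp add: ybar_def)
  moreover have "- inner xstar (b - A *v ybar) \<le> norm xstar * norm (b - A *v ybar)"
    using norm_cauchy_schwarz[of "- xstar" "b - A *v ybar"] by simp
  ultimately have lower: "- norm xstar * norm (b - A *v ybar) \<le> F xbar + \<phi> ybar"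
    by linarith
  have "0 \<le> L / (2 * real N)" by (rule divide_nonneg_nonneg) (use L_nonneg in auto)
  note bounds = quadratic_model_bounds[OF averaged_gap_le[OF N, folded xbar_def ybar_def]
      lower norm_ge_zero this]
  from bounds(1) show "F xbar + \<phi> ybar \<le> 2 * L * (norm xstar)\<^sup>2 / real N"
    by simp
  from bounds(2) show "norm (A *v ybar - b) \<le> 2 * L * norm xstar / real N"
    by (simp add: norm_minus_commute)
qed

end

theorem theorem4p1:
  fixes Q :: "(real ^ 'm) set"
    and A :: "real ^ 'm ^ 'n" and b :: "real ^ 'n"
    and \<phi> :: "real ^ 'm \<Rightarrow> real"
    and \<mu> p \<epsilon> \<epsilon>' :: real
    and ystar :: "real ^ 'm" and xstar :: "real ^ 'n"
    and yx :: "real ^ 'n \<Rightarrow> real ^ 'm"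
    and xk :: "nat \<Rightarrow> real ^ 'n"
  assumes Q_closed: "closed Q" and Q_convex: "convex Q"
    and mu_pos: "\<mu> > 0" and p_ge: "1 \<le> p" and p_le: "p \<le> 2"
    and sc: "strongly_convex_pnorm_on \<mu> p Q \<phi>"
    and ystar_feas: "ystar \<in> Q" "A *v ystar = b"
    and ystar_opt: "\<forall>y\<in>Q. A *v y = b \<longrightarrow> \<phi> ystar \<le> \<phi> y"
    and xstar_opt: "\<forall>x. dual_obj Q \<phi> A b xstar \<le> dual_obj Q \<phi> A b x"
    and xstar_min_norm: "\<forall>x. (\<forall>x'. dual_obj Q \<phi> A b x \<le> dual_obj Q \<phi> A b x')
                               \<longrightarrow> norm xstar \<le> norm x"
    and yx_max: "\<forall>x. yx x \<in> Q \<and>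
                    (\<forall>y\<in>Q. inner x (b - A *v y) - \<phi> y \<le> inner x (b - A *v yx x) - \<phi> (yx x))"
    and x0: "xk 0 = 0"
    and xstep: "\<forall>k. xk (Suc k) = xk k -
        (1 / ((1 / \<mu>) * Sup {(norm (A *v y))\<^sup>2 | y. norm y \<le> 1})) *\<^sub>R (b - A *v yx (xk k))"
    and eps_pos: "\<epsilon> > 0" and eps'_pos: "\<epsilon>' > 0"
  shows
    "(\<forall>N::nat. N \<ge> 1 \<longrightarrow>
        dual_obj Q \<phi> A b ((1 / real N) *\<^sub>R (\<Sum>k=1..N. xk k))
          + \<phi> ((1 / real N) *\<^sub>R (\<Sum>k<N. yx (xk k))) \<le> \<epsilon>
        \<and> norm (A *v ((1 / real N) *\<^sub>R (\<Sum>k<N. yx (xk k))) - b) \<le> \<epsilon>'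
        \<longrightarrow> \<phi> ((1 / real N) *\<^sub>R (\<Sum>k<N. yx (xk k))) - \<phi> ystar \<le> \<epsilon>
          \<and> norm (A *v ((1 / real N) *\<^sub>R (\<Sum>k<N. yx (xk k))) - b) \<le> \<epsilon>')
   \<and> (\<forall>N::nat. N \<ge> 1 \<longrightarrow>
        real N \<ge> max (2 * ((1 / \<mu>) * Sup {(norm (A *v y))\<^sup>2 | y. norm y \<le> 1}) * (norm xstar)\<^sup>2 / \<epsilon>)
                     (2 * ((1 / \<mu>) * Sup {(norm (A *v y))\<^sup>2 | y. norm y \<le> 1}) * norm xstar / \<epsilon>')
        \<longrightarrow> dual_obj Q \<phi> A b ((1 / real N) *\<^sub>R (\<Sum>k=1..N. xk k))
              + \<phi> ((1 / real N) *\<^sub>R (\<Sum>k<N. yx (xk k))) \<le> \<epsilon>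
          \<and> norm (A *v ((1 / real N) *\<^sub>R (\<Sum>k<N. yx (xk k))) - b) \<le> \<epsilon>')"
proof -
  interpret dual_gradient_descent Q \<phi> A b yx \<mu> xk
  proof
    show "\<phi> z + inner g (y - z) + \<mu> / 2 * (norm (y - z))\<^sup>2 \<le> \<phi> y"
      if "y \<in> Q" "z \<in> Q" "g \<in> subgrad_on Q \<phi> z" for y z g
      using strongly_convex_pnorm_on_norm[OF sc _ p_le _ that] p_ge mu_pos by simp
  qed (use yx_max mu_pos sc ystar_feas x0 xstep in \<open>auto simp: strongly_convex_pnorm_on_def\<close>)
  show ?thesis
  proof (intro conjI allI impI)
    fix N :: nat
    assume "1 \<le> N" and "F ((1 / real N) *\<^sub>R (\<Sum>k=1..N. xk k)) + \<phi> ((1 / real N) *\<^sub>R (\<Sum>k<N. yx (xk k))) \<le> \<epsilon>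
        \<and> norm (A *v ((1 / real N) *\<^sub>R (\<Sum>k<N. yx (xk k))) - b) \<le> \<epsilon>'"
    with weak_duality[OF ystar_feas, of "(1 / real N) *\<^sub>R (\<Sum>k=1..N. xk k)"]
    show "\<phi> ((1 / real N) *\<^sub>R (\<Sum>k<N. yx (xk k))) - \<phi> ystar \<le> \<epsilon>"
      and "norm (A *v ((1 / real N) *\<^sub>R (\<Sum>k<N. yx (xk k))) - b) \<le> \<epsilon>'"
      by linarith+
  next
    fix N :: nat
    assume N: "1 \<le> N" and "max (2 * L * (norm xstar)\<^sup>2 / \<epsilon>) (2 * L * norm xstar / \<epsilon>') \<le> real N"
    moreover have "0 < real N" using N by simp
    ultimately have "2 * L * (norm xstar)\<^sup>2 / real N \<le> \<epsilon>" and "2 * L * norm xstar / real N \<le> \<epsilon>'"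
      using eps_pos eps'_pos by (simp_all only: max.bounded_iff pos_divide_le_eq mult.commute)
    with averaged_gap_and_residual_le[OF N xstar_opt[rule_format]]
    show "F ((1 / real N) *\<^sub>R (\<Sum>k=1..N. xk k)) + \<phi> ((1 / real N) *\<^sub>R (\<Sum>k<N. yx (xk k))) \<le> \<epsilon>"
      and "norm (A *v ((1 / real N) *\<^sub>R (\<Sum>k<N. yx (xk k))) - b) \<le> \<epsilon>'"
      by linarith+
  qed
qed

end
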